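(* For every non-crossing pair partition $\pi$, $a_\pi\Lambda=P_\pi(1)\Lambda$, and for every $n\ge1$, $g\in\mathcal D_n$ and $\vec x=(x_1,\dots,x_n)$, $$(a_\pi g)(\vec x)=\big[P_\pi(x_1)\mathbb 1_{n,1}(\vec x)+Q_\pi(x_1)\mathbb 1'_n(\vec x)\big]g(\vec x),$$ where $\mathbb 1'_n=\mathbb 1_n-\mathbb 1_{n,1}$.
   Context: $\mathcal X_{n,m}=\{(x_1,\dots,x_n):x_1>\dots>x_m<\dots<x_n\}$, $\mathcal X_n=\bigcup_m\mathcal X_{n,m}$, $\mathbb 1_n,\mathbb 1_{n,m}$ their indicators. $\mathcal{CV}=\mathbb{C}\Lambda\oplus\bigoplus_{n\ge1}L^2(\mathcal X_n)$; $a\Lambda=\mathbb 1_{[0,1]}$, $(ag)(x,\vec x)=\mathbb 1_{[0,1]}(x)\mathbb 1_{n+1}(x,\vec x)g(\vec x)$; $a^*\Lambda=0$, $a^*g=(\int_0^1g)\Lambda$ on $L^2(\mathcal X_1)$, $(a^*g)(\vec x)=\mathbb 1_{n,1}(\vec x)\int_0^{x_1}g(x,\vec x)dx+\int_{x_1}^1g(x,\vec x)dx$ on $L^2(\mathcal X_{n+1})$. $\mathcal D_n$: functions in $L^2(\mathcal X_n)$ vanishing outside $[0,1]^n$ and polynomial on each $\mathcal X_{n,m}\cap[0,1]^n$. Each nonempty non-crossing pair partition decomposes uniquely as $\pi=\{\{1,2m+2\}\}\cup(\pi'+1)\cup(\pi''+2m+2)$ with $\pi',\pi''$ non-crossing pair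 partitions of $[2m]$ and of the remaining points (shifts applied to all legs). Define $a_\emptyset=\mathrm{id}$, $a_\pi=a^*a_{\pi'}a\,a_{\pi''}$; polynomials on $[0,1]$: $P_\emptyset=Q_\emptyset=1$, $P_\pi(x)=\big[\int_0^xP_{\pi'}(t)dt+\int_x^1Q_{\pi'}(t)dt\big]P_{\pi''}(x)$, $Q_\pi(x)=\big[\int_x^1Q_{\pi'}(t)dt\big]Q_{\pi''}(x)$. *)

theory Defs
  imports "HOL-Analysis.Analysis"
begin

text \<open>Points of R^n are real lists of length n; x_1 is the head.
  The space CV = C Lambda + (sum over n >= 1 of L2(X_n)) is encoded as functions on real lists:
  the value at the empty list is the Lambda-coefficient, and the restriction to lists of length n
  is the component in L2(X_n) (a representative vanishing outside X_n).\<close>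

type_synonym cv = "real list \<Rightarrow> complex"

definition ind :: "bool \<Rightarrow> complex" where
  "ind b = (if b then 1 else 0)"

text \<open>X_{n,m}: x_1 > ... > x_m < ... < x_n (list indices shifted by one).\<close>
definition inXm :: "nat \<Rightarrow> nat \<Rightarrow> real list \<Rightarrow> bool" where
  "inXm n m xs \<longleftrightarrow> length xs = n \<and> 1 \<le> m \<and> m \<le> n \<and>
     (\<forall>i. i + 1 < m \<longrightarrow> xs ! i > xs ! (i + 1)) \<and>
     (\<forall>i. m \<le> i + 1 \<and> i + 1 < n \<longrightarrow> xs ! i < xs ! (i + 1))"

definition inX :: "nat \<Rightarrow> real list \<Rightarrow> bool" where
  "inX n xs \<longleftrightarrow> (\<exists>m. inXm n m xs)"

definition oint :: "real \<Rightarrow> real \<Rightarrow> (real \<Rightarrow> 'b::{banach,second_countable_topology}) \<Rightarrow> 'b" where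
  "oint a b f = interval_lebesgue_integral lborel (ereal a) (ereal b) f"

definition Lam :: cv where
  "Lam = (\<lambda>xs. if xs = [] then 1 else 0)"

fun cre :: "cv \<Rightarrow> cv" where
  "cre f [] = 0"
| "cre f (x # xs) = ind (0 \<le> x \<and> x \<le> 1) * ind (inX (Suc (length xs)) (x # xs)) * f xs"

fun ann :: "cv \<Rightarrow> cv" where
  "ann f [] = oint 0 1 (\<lambda>x. f [x])"
| "ann f (y # ys) =
     ind (inXm (Suc (length ys)) 1 (y # ys)) * oint 0 y (\<lambda>x. f (x # y # ys))
     + oint y 1 (\<lambda>x. f (x # y # ys))"

text \<open>Non-crossing pair partitions, represented through their unique decomposition
  pi = {{1,2m+2}} u (pi'+1) u (pi''+2m+2): NCEmpty is the empty partition,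
  NCSplit pi' pi'' the decomposed one.\<close>
datatype ncpp = NCEmpty | NCSplit ncpp ncpp

fun ncpp_size :: "ncpp \<Rightarrow> nat" where
  "ncpp_size NCEmpty = 0"
| "ncpp_size (NCSplit p q) = Suc (ncpp_size p + ncpp_size q)"

fun blocks :: "ncpp \<Rightarrow> nat set set" where
  "blocks NCEmpty = {}"
| "blocks (NCSplit p q) =
     {{1, 2 * ncpp_size p + 2}} \<union> ((\<lambda>B. (\<lambda>i. i + 1) ` B) ` blocks p)
     \<union> ((\<lambda>B. (\<lambda>i. i + (2 * ncpp_size p + 2)) ` B) ` blocks q)"

fun a_pi :: "ncpp \<Rightarrow> cv \<Rightarrow> cv" where
  "a_pi NCEmpty f = f"
| "a_pi (NCSplit p q) f = ann (a_pi p (cre (a_pi q f)))"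

fun Q_pi :: "ncpp \<Rightarrow> real \<Rightarrow> real" where
  "Q_pi NCEmpty x = 1"
| "Q_pi (NCSplit p q) x = oint x 1 (Q_pi p) * Q_pi q x"

fun P_pi :: "ncpp \<Rightarrow> real \<Rightarrow> real" where
  "P_pi NCEmpty x = 1"
| "P_pi (NCSplit p q) x = (oint 0 x (P_pi p) + oint x 1 (Q_pi p)) * P_pi q x"

inductive mpoly_fun :: "nat \<Rightarrow> (real list \<Rightarrow> complex) \<Rightarrow> bool" for n where
  const: "mpoly_fun n (\<lambda>_. c)"
| coord: "i < n \<Longrightarrow> mpoly_fun n (\<lambda>xs. complex_of_real (xs ! i))"
| add: "mpoly_fun n p \<Longrightarrow> mpoly_fun n q \<Longrightarrow> mpoly_fun n (\<lambda>xs. p xs + q xs)"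
| mult: "mpoly_fun n p \<Longrightarrow> mpoly_fun n q \<Longrightarrow> mpoly_fun n (\<lambda>xs. p xs * q xs)"

definition Dn :: "nat \<Rightarrow> cv set" where
  "Dn n = {g. (\<forall>xs. g xs \<noteq> 0 \<longrightarrow> length xs = n \<and> inX n xs \<and> (\<forall>x\<in>set xs. 0 \<le> x \<and> x \<le> 1)) \<and>
              (\<forall>m\<in>{1..n}. \<exists>p. mpoly_fun n p \<and>
                 (\<forall>xs. inXm n m xs \<and> (\<forall>x\<in>set xs. 0 \<le> x \<and> x \<le> 1) \<longrightarrow> g xs = p xs))}"

end

(* Induction along the decomposition a_pi = a* a_pi' a a_pi''. On D_n every a_pi acts as multiplication
   by P_pi(x_1) on X_{n,1} and by Q_pi(x_1) on the rest of X_n; as P_pi and Q_pi are polynomials, this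
   multiplier preserves D_n, and a maps D_n into D_{n+1}. In the induction step a* integrates out the new
   first coordinate x of (x, x_1, ..., x_n). For x > x_1 the point lies in X_{n+1} but never in X_{n+1,1},
   which contributes the integral of Q_pi' over (x_1, 1). For x < x_1 it lies in X_{n+1,1} exactly when
   (x_1, ..., x_n) lies in X_{n,1}, the only case in which a* keeps this part, and then contributes the
   integral of P_pi' over (0, x_1). These are precisely the recursions defining P_pi and Q_pi. *)

theory Submission
  imports Defs "HOL-Computational_Algebra.Polynomial"
begin

lemma inXm_Cons_1:
  assumes "inXm n 1 (y # ys)" "x < y"
  shows "inXm (Suc n) 1 (x # y # ys)"
  using assms unfolding inXm_def
  by (auto simp: nth_Cons split: nat.split)

lemma inXm_Cons_Suc:
  assumes "inXm n m (y # ys)" "y < x"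
  shows "inXm (Suc n) (Suc m) (x # y # ys)"
  using assms unfolding inXm_def
  by (auto simp: nth_Cons split: nat.split)

lemma not_inXm_1_Cons_Cons: "y < x \<Longrightarrow> \<not> inXm n 1 (x # y # ys)"
  unfolding inXm_def by (auto dest!: spec[of _ 0])

lemma inXm_1_unique: "inXm n 1 xs \<Longrightarrow> inXm n m xs \<Longrightarrow> m = 1"
  unfolding inXm_def by (auto dest!: spec[of _ 0])

lemma inXm_tl:
  assumes "inXm (Suc n) m (x # xs)" "1 \<le> n"
  shows "inXm n (max (m - 1) 1) xs"
proof -
  have len: "length xs = n" "1 \<le> m" "m \<le> Suc n"
    and decr: "\<And>i. i + 1 < m \<Longrightarrow> (x # xs) ! i > (x # xs) ! (i + 1)"
    and incr: "\<And>i. m \<le> i + 1 \<Longrightarrow> i + 1 < Suc n \<Longrightarrow> (x # xs) ! i < (x # xs) ! (i + 1)"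
    using assms(1) unfolding inXm_def by auto
  show ?thesis
    unfolding inXm_def using len assms(2) decr[of "Suc _"] incr[of "Suc _"] by auto
qed

lemma inXm_inX: "inXm n m xs \<Longrightarrow> inX n xs"
  unfolding inX_def by blast

definition poly_antideriv :: "real poly \<Rightarrow> real poly" where
  "poly_antideriv p = (\<Sum>i\<le>degree p. monom (coeff p i / of_nat (Suc i)) (Suc i))"

lemma pderiv_poly_antideriv: "pderiv (poly_antideriv p) = p"
proof -
  have "pderiv (poly_antideriv p) = (\<Sum>i\<le>degree p. pderiv (monom (coeff p i / of_nat (Suc i)) (Suc i)))"
    unfolding poly_antideriv_def using higher_pderiv_sum[of 1] by simp
  also have "\<dots> = (\<Sum>i\<le>degree p. monom (coeff p i) i)"
    by (intro sum.cong refl) (simp add: pderiv_monom del: of_nat_Suc)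
  also have "\<dots> = p"
    by (rule poly_as_sum_of_monoms)
  finally show ?thesis .
qed

lemma oint_poly: "oint a b (poly p) = poly (poly_antideriv p) b - poly (poly_antideriv p) a"
  unfolding oint_def
proof (rule interval_integral_FTC_finite)
  show "continuous_on {min a b..max a b} (poly p)"
    by (intro continuous_intros)
  fix x
  have "(poly (poly_antideriv p) has_real_derivative poly p x) (at x)"
    using poly_DERIV[of "poly_antideriv p" x] by (simp add: pderiv_poly_antideriv)
  then show "(poly (poly_antideriv p) has_vector_derivative poly p x) (at x within {min a b..max a b})"
    by (simp add: has_real_derivative_iff_has_vector_derivative[symmetric] has_field_derivative_at_within)
qed

lemma oint_of_real_mult: "oint a b (\<lambda>x. complex_of_real (f x) * c) = complex_of_real (oint a b f) * c"
  by (simp add: oint_def interval_lebesgue_integral_of_real)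

lemma oint_cong:
  "a \<le> b \<Longrightarrow> (\<And>x. a < x \<Longrightarrow> x < b \<Longrightarrow> f x = g x) \<Longrightarrow> oint a b f = oint a b g"
  unfolding oint_def by (rule interval_integral_cong) (auto simp: einterval_def min_def max_def)

lemma P_pi_Q_pi_poly: "\<exists>A B. P_pi t = poly A \<and> Q_pi t = poly B"
proof (induction t)
  case NCEmpty
  show ?case by (intro exI[of _ 1]) (simp add: fun_eq_iff)
next
  case (NCSplit p q)
  then obtain A B A' B' where AB:
    "P_pi p = poly A" "Q_pi p = poly B" "P_pi q = poly A'" "Q_pi q = poly B'"
    by blast
  let ?I = "poly_antideriv"
  have "P_pi (NCSplit p q) = poly (([:poly (?I B) 1 - poly (?I A) 0:] + ?I A - ?I B) * A')"
    "Q_pi (NCSplit p q) = poly (([:poly (?I B) 1:] - ?I B) * B')"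
    by (simp_all add: fun_eq_iff AB oint_poly algebra_simps)
  then show ?case by blast
qed

lemma mpoly_fun_tl:
  "mpoly_fun n p \<Longrightarrow> \<exists>p'. mpoly_fun (Suc n) p' \<and> (\<forall>x xs. p' (x # xs) = p xs)"
proof (induction rule: mpoly_fun.induct)
  case (const c)
  show ?case by (intro exI[of _ "\<lambda>_. c"]) (simp add: mpoly_fun.const)
next
  case (coord i)
  then show ?case
    by (intro exI[of _ "\<lambda>xs. complex_of_real (xs ! Suc i)"]) (simp add: mpoly_fun.coord)
next
  case (add p q)
  then obtain p' q' where "mpoly_fun (Suc n) p'" "\<forall>x xs. p' (x # xs) = p xs"
    "mpoly_fun (Suc n) q'" "\<forall>x xs. q' (x # xs) = q xs" by blast
  then show ?case by (intro exI[of _ "\<lambda>xs. p' xs + q' xs"]) (simp add: mpoly_fun.add)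
next
  case (mult p q)
  then obtain p' q' where "mpoly_fun (Suc n) p'" "\<forall>x xs. p' (x # xs) = p xs"
    "mpoly_fun (Suc n) q'" "\<forall>x xs. q' (x # xs) = q xs" by blast
  then show ?case by (intro exI[of _ "\<lambda>xs. p' xs * q' xs"]) (simp add: mpoly_fun.mult)
qed

lemma mpoly_fun_poly_nth: "i < n \<Longrightarrow> mpoly_fun n (\<lambda>xs. complex_of_real (poly A (xs ! i)))"
proof (induction A)
  case 0
  show ?case using mpoly_fun.const[of n 0] by simp
next
  case (pCons a A)
  then have "mpoly_fun n (\<lambda>xs. complex_of_real a
      + complex_of_real (xs ! i) * complex_of_real (poly A (xs ! i)))"
    by (intro mpoly_fun.intros)
  then show ?case by simp
qed

lemma Dn_nonzeroD:
  "g \<in> Dn n \<Longrightarrow> g xs \<noteq> 0 \<Longrightarrow> length xs = n \<and> inX n xs \<and> (\<forall>x\<in>set xs. 0 \<le> x \<and> x \<le> 1)"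
  unfolding Dn_def by blast

(* The multiplier P(x_1) 1_{n,1} + Q(x_1) 1'_n of the theorem, for all n at once. *)
definition hd_mult :: "(real \<Rightarrow> real) \<Rightarrow> (real \<Rightarrow> real) \<Rightarrow> cv \<Rightarrow> cv" where
  "hd_mult P Q g xs = complex_of_real (if inXm (length xs) 1 xs then P (hd xs) else Q (hd xs)) * g xs"

lemma hd_mult_1: "hd_mult (\<lambda>_. 1) (\<lambda>_. 1) g = g"
  by (simp add: fun_eq_iff hd_mult_def)

lemma hd_mult_hd_mult:
  "hd_mult P Q (hd_mult P' Q' g) = hd_mult (\<lambda>x. P x * P' x) (\<lambda>x. Q x * Q' x) g"
  by (simp add: fun_eq_iff hd_mult_def)

lemma hd_mult_Dn_eq_ind:
  assumes "g \<in> Dn n" "length xs = n"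
  shows "hd_mult P Q g xs =
    (complex_of_real (P (hd xs)) * ind (inXm n 1 xs)
     + complex_of_real (Q (hd xs)) * (ind (inX n xs) - ind (inXm n 1 xs))) * g xs"
  using assms Dn_nonzeroD[OF assms(1), of xs] inXm_inX[of n 1 xs]
  by (cases "g xs = 0") (auto simp: hd_mult_def ind_def inX_def)

lemma hd_mult_poly_in_Dn:
  assumes g: "g \<in> Dn n" and n: "1 \<le> n"
  shows "hd_mult (poly A) (poly B) g \<in> Dn n"
  unfolding Dn_def
proof (rule CollectI, rule conjI; intro allI impI ballI)
  fix xs assume "hd_mult (poly A) (poly B) g xs \<noteq> 0"
  then show "length xs = n \<and> inX n xs \<and> (\<forall>x\<in>set xs. 0 \<le> x \<and> x \<le> 1)"
    using Dn_nonzeroD[OF g] by (auto simp: hd_mult_def)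
next
  fix m assume m: "m \<in> {1..n}"
  obtain p where p: "mpoly_fun n p"
    and gp: "\<And>xs. inXm n m xs \<Longrightarrow> \<forall>x\<in>set xs. 0 \<le> x \<and> x \<le> 1 \<Longrightarrow> g xs = p xs"
    using g m unfolding Dn_def by blast
  define C where "C = (if m = 1 then A else B)"
  show "\<exists>p. mpoly_fun n p \<and> (\<forall>xs. inXm n m xs \<and> (\<forall>x\<in>set xs. 0 \<le> x \<and> x \<le> 1)
          \<longrightarrow> hd_mult (poly A) (poly B) g xs = p xs)"
  proof (intro exI[of _ "\<lambda>xs. complex_of_real (poly C (xs ! 0)) * p xs"] conjI allI impI)
    show "mpoly_fun n (\<lambda>xs. complex_of_real (poly C (xs ! 0)) * p xs)"
      using n p by (intro mpoly_fun.mult mpoly_fun_poly_nth) auto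
    fix xs assume xs: "inXm n m xs \<and> (\<forall>x\<in>set xs. 0 \<le> x \<and> x \<le> 1)"
    then have "length xs = n" "xs \<noteq> []" "inXm n 1 xs \<longleftrightarrow> m = 1"
      using n inXm_1_unique[of n xs m] unfolding inXm_def by auto
    then show "hd_mult (poly A) (poly B) g xs = complex_of_real (poly C (xs ! 0)) * p xs"
      using xs gp by (simp add: hd_mult_def C_def hd_conv_nth)
  qed
qed

lemma cre_in_Dn:
  assumes h: "h \<in> Dn n" and n: "1 \<le> n"
  shows "cre h \<in> Dn (Suc n)"
  unfolding Dn_def
proof (rule CollectI, rule conjI; intro allI impI ballI)
  fix xs assume nz: "cre h xs \<noteq> 0"
  then obtain x ys where "xs = x # ys" "0 \<le> x \<and> x \<le> 1" "inX (Suc (length ys)) (x # ys)" "h ys \<noteq> 0"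
    by (cases xs) (auto simp: ind_def split: if_splits)
  then show "length xs = Suc n \<and> inX (Suc n) xs \<and> (\<forall>x\<in>set xs. 0 \<le> x \<and> x \<le> 1)"
    using Dn_nonzeroD[OF h] by auto
next
  fix m assume "m \<in> {1..Suc n}"
  then have "max (m - 1) 1 \<in> {1..n}" using n by auto
  then obtain p where p: "mpoly_fun n p"
    and hp: "\<And>xs. inXm n (max (m - 1) 1) xs \<Longrightarrow> \<forall>x\<in>set xs. 0 \<le> x \<and> x \<le> 1 \<Longrightarrow> h xs = p xs"
    using h unfolding Dn_def by blast
  obtain p' where p': "mpoly_fun (Suc n) p'" "\<And>x xs. p' (x # xs) = p xs"
    using mpoly_fun_tl[OF p] by blast
  show "\<exists>p. mpoly_fun (Suc n) p \<and> (\<forall>xs. inXm (Suc n) m xs \<and> (\<forall>x\<in>set xs. 0 \<le> x \<and> x \<le> 1)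
          \<longrightarrow> cre h xs = p xs)"
  proof (intro exI[of _ p'] conjI allI impI)
    fix xs assume xs: "inXm (Suc n) m xs \<and> (\<forall>x\<in>set xs. 0 \<le> x \<and> x \<le> 1)"
    then obtain x ys where "xs = x # ys" "length ys = n"
      unfolding inXm_def by (cases xs) auto
    then show "cre h xs = p' xs"
      using xs hp inXm_tl[of n m x ys] n p' inXm_inX[of "Suc n" m xs] by (auto simp: ind_def)
  qed (rule p')
qed

lemma cre_Lam_in_Dn: "cre (\<lambda>xs. c * Lam xs) \<in> Dn 1"
  unfolding Dn_def
proof (rule CollectI, rule conjI; intro allI impI ballI)
  fix xs assume "cre (\<lambda>xs. c * Lam xs) xs \<noteq> 0"
  then show "length xs = 1 \<and> inX 1 xs \<and> (\<forall>x\<in>set xs. 0 \<le> x \<and> x \<le> 1)"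
    by (cases xs) (auto simp: ind_def Lam_def split: if_splits)
next
  fix m :: nat
  have "cre (\<lambda>xs. c * Lam xs) xs = c" if "inXm 1 m xs" "\<forall>x\<in>set xs. 0 \<le> x \<and> x \<le> 1" for xs
    using that inXm_inX[of 1 m xs] unfolding inXm_def
    by (cases xs) (auto simp: ind_def Lam_def)
  then show "\<exists>p. mpoly_fun 1 p \<and> (\<forall>xs. inXm 1 m xs \<and> (\<forall>x\<in>set xs. 0 \<le> x \<and> x \<le> 1)
      \<longrightarrow> cre (\<lambda>xs. c * Lam xs) xs = p xs)"
    using mpoly_fun.const by blast
qed

lemma ann_hd_mult_cre_Nil: "ann (hd_mult P Q (cre h)) [] = complex_of_real (oint 0 1 P) * h []"
proof -
  have "ann (hd_mult P Q (cre h)) [] = oint 0 1 (\<lambda>x. complex_of_real (P x) * h [])"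
    by (auto intro!: oint_cong simp: hd_mult_def ind_def inXm_def inX_def)
  then show ?thesis by (simp add: oint_of_real_mult)
qed

lemma ann_hd_mult_cre_Cons:
  assumes supp: "h (y # ys) \<noteq> 0 \<Longrightarrow> inX (length (y # ys)) (y # ys) \<and> 0 \<le> y \<and> y \<le> 1"
  shows "ann (hd_mult P Q (cre h)) (y # ys)
    = hd_mult (\<lambda>t. oint 0 t P + oint t 1 Q) (\<lambda>t. oint t 1 Q) h (y # ys)"
proof (cases "h (y # ys) = 0")
  case True
  then show ?thesis by (simp add: hd_mult_def oint_def)
next
  case False
  define n where "n = length (y # ys)"
  obtain m where m: "inXm n m (y # ys)" and y: "0 \<le> y" "y \<le> 1"
    using supp False unfolding n_def inX_def by blast
  let ?F = "\<lambda>x. hd_mult P Q (cre h) (x # y # ys)"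
  have upper: "oint y 1 ?F = oint y 1 (\<lambda>x. complex_of_real (Q x) * h (y # ys))"
  proof (rule oint_cong)
    fix x assume "y < x" "x < 1"
    then show "?F x = complex_of_real (Q x) * h (y # ys)"
      using y inXm_inX[OF inXm_Cons_Suc[OF m \<open>y < x\<close>]] not_inXm_1_Cons_Cons[OF \<open>y < x\<close>]
      by (simp add: hd_mult_def ind_def n_def)
  qed (use y in simp)
  have lower: "oint 0 y ?F = oint 0 y (\<lambda>x. complex_of_real (P x) * h (y # ys))"
    if "inXm n 1 (y # ys)"
  proof (rule oint_cong)
    fix x assume "0 < x" "x < y"
    then show "?F x = complex_of_real (P x) * h (y # ys)"
      using y inXm_inX[OF inXm_Cons_1[OF that \<open>x < y\<close>]] inXm_Cons_1[OF that \<open>x < y\<close>]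
      by (simp add: hd_mult_def ind_def n_def)
  qed (use y in simp)
  have "ann (hd_mult P Q (cre h)) (y # ys) = ind (inXm n 1 (y # ys)) * oint 0 y ?F + oint y 1 ?F"
    by (simp add: n_def)
  then show ?thesis
    using upper lower by (simp add: hd_mult_def ind_def oint_of_real_mult n_def algebra_simps)
qed

lemma ann_hd_mult_cre:
  assumes h: "h \<in> Dn n" and n: "1 \<le> n"
  shows "ann (hd_mult P Q (cre h)) = hd_mult (\<lambda>t. oint 0 t P + oint t 1 Q) (\<lambda>t. oint t 1 Q) h"
proof
  fix xs
  show "ann (hd_mult P Q (cre h)) xs = hd_mult (\<lambda>t. oint 0 t P + oint t 1 Q) (\<lambda>t. oint t 1 Q) h xs"
  proof (cases xs)
    case Nil
    have "h [] = 0"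
      using Dn_nonzeroD[OF h] n by fastforce
    then show ?thesis
      unfolding Nil ann_hd_mult_cre_Nil by (simp add: hd_mult_def)
  next
    case (Cons y ys)
    show ?thesis
      unfolding Cons by (rule ann_hd_mult_cre_Cons) (use Dn_nonzeroD[OF h, of "y # ys"] in auto)
  qed
qed

lemma a_pi_on_Dn: "g \<in> Dn n \<Longrightarrow> 1 \<le> n \<Longrightarrow> a_pi t g = hd_mult (P_pi t) (Q_pi t) g"
proof (induction t arbitrary: n g)
  case NCEmpty
  show ?case using hd_mult_1 by (simp add: fun_eq_iff)
next
  case (NCSplit p q)
  obtain A B where AB: "P_pi q = poly A" "Q_pi q = poly B"
    using P_pi_Q_pi_poly by blast
  define h where "h = a_pi q g"
  have h: "h = hd_mult (P_pi q) (Q_pi q) g"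
    unfolding h_def using NCSplit by blast
  then have "h \<in> Dn n"
    using hd_mult_poly_in_Dn NCSplit.prems AB by simp
  then have "cre h \<in> Dn (Suc n)"
    using cre_in_Dn NCSplit.prems(2) by blast
  have "a_pi (NCSplit p q) g = ann (a_pi p (cre h))"
    by (simp add: h_def)
  also have "a_pi p (cre h) = hd_mult (P_pi p) (Q_pi p) (cre h)"
    using NCSplit.IH(1) \<open>cre h \<in> Dn (Suc n)\<close> by simp
  also have "ann \<dots> = hd_mult (\<lambda>t. oint 0 t (P_pi p) + oint t 1 (Q_pi p)) (\<lambda>t. oint t 1 (Q_pi p)) h"
    using \<open>h \<in> Dn n\<close> NCSplit.prems(2) by (rule ann_hd_mult_cre)
  also have "\<dots> = hd_mult (P_pi (NCSplit p q)) (Q_pi (NCSplit p q)) g"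
    unfolding h hd_mult_hd_mult by (simp add: hd_mult_def fun_eq_iff)
  finally show ?case .
qed

lemma a_pi_Lam: "a_pi t Lam = (\<lambda>xs. complex_of_real (P_pi t 1) * Lam xs)"
proof (induction t)
  case NCEmpty
  show ?case by simp
next
  case (NCSplit p q)
  define c where "c = complex_of_real (P_pi q 1)"
  have "a_pi (NCSplit p q) Lam = ann (a_pi p (cre (\<lambda>xs. c * Lam xs)))"
    using NCSplit.IH(2) by (simp add: c_def)
  also have "a_pi p (cre (\<lambda>xs. c * Lam xs)) = hd_mult (P_pi p) (Q_pi p) (cre (\<lambda>xs. c * Lam xs))"
    using a_pi_on_Dn cre_Lam_in_Dn by blast
  also have "ann \<dots> = (\<lambda>xs. complex_of_real (oint 0 1 (P_pi p)) * c * Lam xs)"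
  proof
    fix xs
    show "ann (hd_mult (P_pi p) (Q_pi p) (cre (\<lambda>xs. c * Lam xs))) xs
      = complex_of_real (oint 0 1 (P_pi p)) * c * Lam xs"
    proof (cases xs)
      case Nil
      then show ?thesis
        unfolding Nil ann_hd_mult_cre_Nil by (simp add: Lam_def)
    next
      case (Cons y ys)
      then show ?thesis
        unfolding Cons by (subst ann_hd_mult_cre_Cons) (simp_all add: hd_mult_def Lam_def)
    qed
  qed
  also have "\<dots> = (\<lambda>xs. complex_of_real (P_pi (NCSplit p q) 1) * Lam xs)"
    by (simp add: c_def oint_def)
  finally show ?case .
qed

theorem mainTheorem18:
  fixes pi :: ncpp
  shows "a_pi pi Lam = (\<lambda>xs. complex_of_real (P_pi pi 1) * Lam xs)
    \<and> (\<forall>n g. 1 \<le> n \<longrightarrow> g \<in> Dn n \<longrightarrow>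
         (\<forall>xs. length xs = n \<longrightarrow>
            a_pi pi g xs =
              (complex_of_real (P_pi pi (hd xs)) * ind (inXm n 1 xs)
               + complex_of_real (Q_pi pi (hd xs)) * (ind (inX n xs) - ind (inXm n 1 xs))) * g xs)
       \<and> (\<forall>xs. length xs \<noteq> n \<longrightarrow> a_pi pi g xs = 0))"
proof (intro conjI allI impI)
  show "a_pi pi Lam = (\<lambda>xs. complex_of_real (P_pi pi 1) * Lam xs)"
    by (rule a_pi_Lam)
next
  fix n g and xs :: "real list"
  assume "1 \<le> n" "g \<in> Dn n" "length xs = n"
  then show "a_pi pi g xs =
      (complex_of_real (P_pi pi (hd xs)) * ind (inXm n 1 xs)
       + complex_of_real (Q_pi pi (hd xs)) * (ind (inX n xs) - ind (inXm n 1 xs))) * g xs"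
    by (simp add: a_pi_on_Dn hd_mult_Dn_eq_ind)
next
  fix n g and xs :: "real list"
  assume "1 \<le> n" "g \<in> Dn n" "length xs \<noteq> n"
  then show "a_pi pi g xs = 0"
    using Dn_nonzeroD by (fastforce simp: a_pi_on_Dn hd_mult_def)
qed

end
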